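(* Assume (D1)–(D3) and that $\mathcal D_\lambda$ is positive definite on $H^1(\mathbb R^4)\times H^1(\mathbb R^4)$. Then $m_a+m_b\ge m_{\lambda,\beta}$ and $\min\{m_a,m_b\}\ge m^*_{\lambda,\beta}$ for all $\beta\in\mathbb R$.
   Context: (D1) $a,b\in C(\mathbb R^4)$, $a,b\ge0$; (D2) $a(x)\to a_\infty\in(0,\infty)$, $b(x)\to b_\infty\in(0,\infty)$ as $|x|\to\infty$, $a\le a_\infty$, $b\le b_\infty$; (D3) $\Omega_a:=\operatorname{int}a^{-1}(0)$, $\Omega_b:=\operatorname{int}b^{-1}(0)$ nonempty bounded smooth domains with $\overline{\Omega_a}=a^{-1}(0)$, $\overline{\Omega_b}=b^{-1}(0)$, $\overline{\Omega_a}\cap\overline{\Omega_b}=\emptyset$. $a_0,b_0\in\mathbb R$, $\lambda>0$. $\mathcal D_\lambda(u,v)=\int(|\nabla u|^2+(\lambda a+a_0)u^2)+\int(|\nabla v|^2+(\lambda b+b_0)v^2)$, $J_{\lambda,\beta}(u,v)=\frac12\mathcal D_\lambda(u,v)-\frac14\int(u^4+v^4+2\beta u^2v^2)$ on $H^1(\mathbb R^4)^2$. $\mathcal N_{\lambda,\beta}=\{(u,v):u\ne0,v\ne0,\langle J'_{\lambda,\beta}(u,v),(u,0)\rangle=\langle J'_{\lambda,\beta}(u,v),(0,v)\rangle=0\}$, $\mathcal M_{\lambda,\beta}=\{(u,v)\ne(0,0):\langle J'_{\lambda,\beta}(u,v),(u,v)\rangle=0\}$, $m_{\lambda,\beta}=\inf_{\mathcal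 N_{\lambda,\beta}}J_{\lambda,\beta}$, $m^*_{\lambda,\beta}=\inf_{\mathcal M_{\lambda,\beta}}J_{\lambda,\beta}$. $I_{\Omega_a}(u)=\frac12\int_{\Omega_a}(|\nabla u|^2+a_0u^2)-\frac14\int_{\Omega_a}u^4$ on $H^1_0(\Omega_a)$, $\mathcal N_a=\{u\in H^1_0(\Omega_a)\setminus\{0\}:I'_{\Omega_a}(u)u=0\}$, $m_a=\inf_{\mathcal N_a}I_{\Omega_a}$; $I_{\Omega_b},\mathcal N_b,m_b$ analogously with $\Omega_b,b_0$. *)

theory Defs
  imports "HOL-Analysis.Analysis"
begin

type_synonym R4 = "real^4"

definition pd :: "4 \<Rightarrow> (R4 \<Rightarrow> real) \<Rightarrow> R4 \<Rightarrow> real" where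
  "pd i f x = frechet_derivative f (at x) (axis i 1)"

definition Cinf :: "(R4 \<Rightarrow> real) set" where
  "Cinf = \<Union>{F. \<forall>g\<in>F. (\<forall>x. g differentiable (at x)) \<and> (\<forall>i. pd i g \<in> F)}"

definition Cc_inf :: "R4 set \<Rightarrow> (R4 \<Rightarrow> real) set" where
  "Cc_inf U = {\<phi> \<in> Cinf. compact (closure {x. \<phi> x \<noteq> 0}) \<and> closure {x. \<phi> x \<noteq> 0} \<subseteq> U}"

definition L2 :: "(R4 \<Rightarrow> real) \<Rightarrow> bool" where
  "L2 u \<longleftrightarrow> u \<in> borel_measurable lborel \<and> integrable lborel (\<lambda>x. (u x)^2)"

definition weak_grad :: "(R4 \<Rightarrow> real) \<Rightarrow> (R4 \<Rightarrow> R4) \<Rightarrow> bool" where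
  "weak_grad u g \<longleftrightarrow> (\<forall>\<phi>\<in>Cc_inf UNIV. \<forall>i.
      (\<integral>x. u x * pd i \<phi> x \<partial>lborel) = - (\<integral>x. g x $ i * \<phi> x \<partial>lborel))"

text \<open>H^1(R^4) (functions, identified a.e. only through the integrals below).\<close>
definition H1 :: "(R4 \<Rightarrow> real) set" where
  "H1 = {u. L2 u \<and> (\<exists>g. (\<forall>i. L2 (\<lambda>x. g x $ i)) \<and> weak_grad u g)}"

definition grad :: "(R4 \<Rightarrow> real) \<Rightarrow> R4 \<Rightarrow> R4" where
  "grad u = (SOME g. (\<forall>i. L2 (\<lambda>x. g x $ i)) \<and> weak_grad u g)"

definition H1norm_sq :: "(R4 \<Rightarrow> real) \<Rightarrow> real" where
  "H1norm_sq u = (\<integral>x. (u x)^2 \<partial>lborel) + (\<integral>x. (norm (grad u x))^2 \<partial>lborel)"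

text \<open>H^1_0(\<Omega>): H^1-closure of C_c^\<infinity>(\<Omega>), elements extended by zero to R^4.\<close>
definition H10 :: "R4 set \<Rightarrow> (R4 \<Rightarrow> real) set" where
  "H10 \<Omega> = {u \<in> H1. \<exists>\<phi>. (\<forall>n. \<phi> n \<in> Cc_inf \<Omega>) \<and>
                 (\<lambda>n. H1norm_sq (\<lambda>x. \<phi> n x - u x)) \<longlonglongrightarrow> 0}"

definition nonzero :: "(R4 \<Rightarrow> real) \<Rightarrow> bool" where
  "nonzero u \<longleftrightarrow> \<not> (AE x in lborel. u x = 0)"

definition smooth_domain :: "R4 set \<Rightarrow> bool" where
  "smooth_domain \<Omega> \<longleftrightarrow> open \<Omega> \<and> connected \<Omega> \<and> \<Omega> \<noteq> {} \<and>
     (\<forall>p\<in>frontier \<Omega>. \<exists>r>0. \<exists>\<rho>\<in>Cinf.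
        (\<forall>x\<in>ball p r. (\<exists>i. pd i \<rho> x \<noteq> 0)) \<and>
        \<Omega> \<inter> ball p r = {x\<in>ball p r. \<rho> x < 0})"

definition I_dom :: "R4 set \<Rightarrow> real \<Rightarrow> (R4 \<Rightarrow> real) \<Rightarrow> real" where
  "I_dom \<Omega> c u = 1/2 * (\<integral>x\<in>\<Omega>. (norm (grad u x))^2 + c * (u x)^2 \<partial>lborel)
                 - 1/4 * (\<integral>x\<in>\<Omega>. (u x)^4 \<partial>lborel)"

text \<open>I'(u)u.\<close>
definition dI_dom :: "R4 set \<Rightarrow> real \<Rightarrow> (R4 \<Rightarrow> real) \<Rightarrow> real" where
  "dI_dom \<Omega> c u = (\<integral>x\<in>\<Omega>. (norm (grad u x))^2 + c * (u x)^2 \<partial>lborel)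
                 - (\<integral>x\<in>\<Omega>. (u x)^4 \<partial>lborel)"

definition Neh :: "R4 set \<Rightarrow> real \<Rightarrow> (R4 \<Rightarrow> real) set" where
  "Neh \<Omega> c = {u \<in> H10 \<Omega>. nonzero u \<and> dI_dom \<Omega> c u = 0}"

definition m_dom :: "R4 set \<Rightarrow> real \<Rightarrow> ereal" where
  "m_dom \<Omega> c = Inf (ereal ` I_dom \<Omega> c ` Neh \<Omega> c)"

definition Dq :: "(R4 \<Rightarrow> real) \<Rightarrow> real \<Rightarrow> real \<Rightarrow> (R4 \<Rightarrow> real) \<Rightarrow> real" where
  "Dq a a0 lam u = (\<integral>x. (norm (grad u x))^2 + (lam * a x + a0) * (u x)^2 \<partial>lborel)"

definition D_lam :: "(R4 \<Rightarrow> real) \<Rightarrow> (R4 \<Rightarrow> real) \<Rightarrow> real \<Rightarrow> real \<Rightarrow> real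
    \<Rightarrow> (R4 \<Rightarrow> real) \<Rightarrow> (R4 \<Rightarrow> real) \<Rightarrow> real" where
  "D_lam a b a0 b0 lam u v = Dq a a0 lam u + Dq b b0 lam v"

definition J :: "(R4 \<Rightarrow> real) \<Rightarrow> (R4 \<Rightarrow> real) \<Rightarrow> real \<Rightarrow> real \<Rightarrow> real \<Rightarrow> real
    \<Rightarrow> (R4 \<Rightarrow> real) \<Rightarrow> (R4 \<Rightarrow> real) \<Rightarrow> real" where
  "J a b a0 b0 lam \<beta> u v = 1/2 * D_lam a b a0 b0 lam u v
     - 1/4 * (\<integral>x. (u x)^4 + (v x)^4 + 2 * \<beta> * (u x)^2 * (v x)^2 \<partial>lborel)"

text \<open>\<langle>J'(u,v),(u,0)\<rangle> and \<langle>J'(u,v),(0,v)\<rangle>, written out.\<close>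
definition dJ1 :: "(R4 \<Rightarrow> real) \<Rightarrow> real \<Rightarrow> real \<Rightarrow> real
    \<Rightarrow> (R4 \<Rightarrow> real) \<Rightarrow> (R4 \<Rightarrow> real) \<Rightarrow> real" where
  "dJ1 a a0 lam \<beta> u v = Dq a a0 lam u - (\<integral>x. (u x)^4 + \<beta> * (u x)^2 * (v x)^2 \<partial>lborel)"

definition N_sys :: "(R4 \<Rightarrow> real) \<Rightarrow> (R4 \<Rightarrow> real) \<Rightarrow> real \<Rightarrow> real \<Rightarrow> real \<Rightarrow> real
    \<Rightarrow> ((R4 \<Rightarrow> real) \<times> (R4 \<Rightarrow> real)) set" where
  "N_sys a b a0 b0 lam \<beta> = {(u, v). u \<in> H1 \<and> v \<in> H1 \<and> nonzero u \<and> nonzero v \<and>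
      dJ1 a a0 lam \<beta> u v = 0 \<and> dJ1 b b0 lam \<beta> v u = 0}"

definition M_sys :: "(R4 \<Rightarrow> real) \<Rightarrow> (R4 \<Rightarrow> real) \<Rightarrow> real \<Rightarrow> real \<Rightarrow> real \<Rightarrow> real
    \<Rightarrow> ((R4 \<Rightarrow> real) \<times> (R4 \<Rightarrow> real)) set" where
  "M_sys a b a0 b0 lam \<beta> = {(u, v). u \<in> H1 \<and> v \<in> H1 \<and> (nonzero u \<or> nonzero v) \<and>
      dJ1 a a0 lam \<beta> u v + dJ1 b b0 lam \<beta> v u = 0}"

definition m_sys :: "(R4 \<Rightarrow> real) \<Rightarrow> (R4 \<Rightarrow> real) \<Rightarrow> real \<Rightarrow> real \<Rightarrow> real \<Rightarrow> real \<Rightarrow> ereal" where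
  "m_sys a b a0 b0 lam \<beta> =
     Inf ((\<lambda>(u, v). ereal (J a b a0 b0 lam \<beta> u v)) ` N_sys a b a0 b0 lam \<beta>)"

definition mstar_sys :: "(R4 \<Rightarrow> real) \<Rightarrow> (R4 \<Rightarrow> real) \<Rightarrow> real \<Rightarrow> real \<Rightarrow> real \<Rightarrow> real \<Rightarrow> ereal" where
  "mstar_sys a b a0 b0 lam \<beta> =
     Inf ((\<lambda>(u, v). ereal (J a b a0 b0 lam \<beta> u v)) ` M_sys a b a0 b0 lam \<beta>)"

end

theory Submission
  imports Defs "HOL-Computational_Algebra.Polynomial"
begin

text \<open>
  An element \<open>u\<close> of the Nehari set of the single equation on \<open>\<Omega>\<^sub>a\<close>, extended by zero, vanishes a.e. outside
  \<open>\<Omega>\<^sub>a\<close> together with its weak gradient, because the frontier of a smooth domain is a null set.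
  Since \<open>a = 0\<close> on \<open>\<Omega>\<^sub>a\<close>, the potential \<open>\<lambda>a\<close> does not see \<open>u\<close>, so the system functional and its
  Nehari constraints evaluated at \<open>(u, 0)\<close> reduce to those of the single equation; this gives
  \<open>m\<^sup>*\<^sub>\<lambda>\<^sub>,\<^sub>\<beta> \<le> m\<^sub>a\<close>, and symmetrically \<open>m\<^sup>*\<^sub>\<lambda>\<^sub>,\<^sub>\<beta> \<le> m\<^sub>b\<close>. For Nehari elements \<open>u\<close> on \<open>\<Omega>\<^sub>a\<close> and \<open>v\<close> on \<open>\<Omega>\<^sub>b\<close> the
  supports are disjoint, so the coupling term \<open>\<beta>u\<^sup>2v\<^sup>2\<close> vanishes and \<open>(u, v)\<close> lies on the system's
  Nehari set with energy \<open>I\<^sub>a(u) + I\<^sub>b(v)\<close>; this gives \<open>m\<^sub>\<lambda>\<^sub>,\<^sub>\<beta> \<le> m\<^sub>a + m\<^sub>b\<close>. Positive definiteness of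
  \<open>\<D>\<^sub>\<lambda>\<close> is only needed to make \<open>\<integral>u\<^sup>4\<close> a genuine (integrable) quantity on the Nehari sets.
  The weak-gradient argument needs a fundamental lemma of the calculus of variations, for which
  smooth bump functions on boxes are constructed from \<open>s \<mapsto> exp (-c/s)\<close>.
\<close>

section \<open>Smooth functions of one real variable\<close>

definition Cinf1 :: "(real \<Rightarrow> real) set" where
  "Cinf1 = \<Union>{F. \<forall>g\<in>F. \<exists>g'\<in>F. \<forall>x. (g has_real_derivative g' x) (at x)}"

lemma Cinf1_coinduct:
  assumes "\<And>g. g \<in> F \<Longrightarrow> \<exists>g'\<in>F. \<forall>x. (g has_real_derivative g' x) (at x)"
  shows "F \<subseteq> Cinf1"
  using assms unfolding Cinf1_def by blast

lemma Cinf1_has_derivative_in_Cinf1: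
  assumes "g \<in> Cinf1"
  shows "\<exists>g'\<in>Cinf1. \<forall>x. (g has_real_derivative g' x) (at x)"
proof -
  from assms obtain F where F: "\<forall>g\<in>F. \<exists>g'\<in>F. \<forall>x. (g has_real_derivative g' x) (at x)" "g \<in> F"
    unfolding Cinf1_def by blast
  then have "F \<subseteq> Cinf1" unfolding Cinf1_def by blast
  with F show ?thesis by blast
qed

definition deriv1 :: "(real \<Rightarrow> real) \<Rightarrow> real \<Rightarrow> real" where
  "deriv1 g = (SOME g'. g' \<in> Cinf1 \<and> (\<forall>x. (g has_real_derivative g' x) (at x)))"

lemma Cinf1_deriv1:
  assumes "g \<in> Cinf1"
  shows "deriv1 g \<in> Cinf1" "\<And>x. (g has_real_derivative deriv1 g x) (at x)"
proof -
  have "\<exists>g'. g' \<in> Cinf1 \<and> (\<forall>x. (g has_real_derivative g' x) (at x))"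
    using Cinf1_has_derivative_in_Cinf1[OF assms] by blast
  from someI_ex[OF this] show "deriv1 g \<in> Cinf1" "\<And>x. (g has_real_derivative deriv1 g x) (at x)"
    unfolding deriv1_def by blast+
qed

text \<open>Closure under products is proved coinductively for the larger class of sums of products,
  which, unlike the class of products, is closed under differentiation.\<close>

definition sum_prods :: "((real \<Rightarrow> real) \<times> (real \<Rightarrow> real)) list \<Rightarrow> real \<Rightarrow> real" where
  "sum_prods L x = (\<Sum>p\<leftarrow>L. fst p x * snd p x)"

definition sum_prods_deriv ::
    "((real \<Rightarrow> real) \<times> (real \<Rightarrow> real)) list \<Rightarrow> ((real \<Rightarrow> real) \<times> (real \<Rightarrow> real)) list" where
  "sum_prods_deriv L = concat (map (\<lambda>p. [(deriv1 (fst p), snd p), (fst p, deriv1 (snd p))]) L)"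

lemma has_real_derivative_sum_prods:
  assumes "set L \<subseteq> Cinf1 \<times> Cinf1"
  shows "set (sum_prods_deriv L) \<subseteq> Cinf1 \<times> Cinf1 \<and>
    (\<forall>x. (sum_prods L has_real_derivative sum_prods (sum_prods_deriv L) x) (at x))"
  using assms
proof (induction L)
  case Nil
  then show ?case by (simp add: sum_prods_deriv_def sum_prods_def)
next
  case (Cons p L)
  obtain f g where p: "p = (f, g)" by force
  have fg: "f \<in> Cinf1" "g \<in> Cinf1" using Cons.prems p by auto
  have IH: "set (sum_prods_deriv L) \<subseteq> Cinf1 \<times> Cinf1"
    "\<And>x. (sum_prods L has_real_derivative sum_prods (sum_prods_deriv L) x) (at x)"
    using Cons by auto
  have cons: "sum_prods (p # L) = (\<lambda>x. f x * g x + sum_prods L x)"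
    by (auto simp: sum_prods_def p)
  have cons_deriv: "sum_prods (sum_prods_deriv (p # L)) x =
      deriv1 f x * g x + f x * deriv1 g x + sum_prods (sum_prods_deriv L) x" for x
    by (simp add: sum_prods_deriv_def sum_prods_def p)
  show ?case
    unfolding cons cons_deriv using IH fg Cinf1_deriv1[OF fg(1)] Cinf1_deriv1[OF fg(2)]
    by (auto simp: sum_prods_deriv_def p intro!: derivative_eq_intros)
qed

lemma sum_prods_Cinf1:
  assumes "set L \<subseteq> Cinf1 \<times> Cinf1"
  shows "sum_prods L \<in> Cinf1"
proof -
  have "{sum_prods L | L. set L \<subseteq> Cinf1 \<times> Cinf1} \<subseteq> Cinf1"
  proof (rule Cinf1_coinduct)
    fix h assume "h \<in> {sum_prods L | L. set L \<subseteq> Cinf1 \<times> Cinf1}"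
    then obtain L where "h = sum_prods L" "set L \<subseteq> Cinf1 \<times> Cinf1" by blast
    then show "\<exists>h'\<in>{sum_prods L | L. set L \<subseteq> Cinf1 \<times> Cinf1}. \<forall>x. (h has_real_derivative h' x) (at x)"
      using has_real_derivative_sum_prods by blast
  qed
  with assms show ?thesis by blast
qed

lemma Cinf1_mult:
  assumes "f \<in> Cinf1" "g \<in> Cinf1"
  shows "(\<lambda>x. f x * g x) \<in> Cinf1"
proof -
  have "sum_prods [(f, g)] \<in> Cinf1" using assms by (intro sum_prods_Cinf1) auto
  moreover have "sum_prods [(f, g)] = (\<lambda>x. f x * g x)"
    by (rule ext) (simp add: sum_prods_def)
  ultimately show ?thesis by simp
qed

lemma Cinf1_affine_comp:
  assumes "f \<in> Cinf1"
  shows "(\<lambda>t. f (a * t + b)) \<in> Cinf1"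
proof -
  let ?F = "{(\<lambda>t. c * f (a * t + b)) | c f. f \<in> Cinf1}"
  have "?F \<subseteq> Cinf1"
  proof (rule Cinf1_coinduct)
    fix g assume "g \<in> ?F"
    then obtain c f where g: "g = (\<lambda>t. c * f (a * t + b))" "f \<in> Cinf1" by blast
    have "(g has_real_derivative (c * a) * deriv1 f (a * x + b)) (at x)" for x
    proof -
      have "((\<lambda>t. f (a * t + b)) has_real_derivative deriv1 f (a * x + b) * a) (at x)"
        by (rule DERIV_chain2[OF Cinf1_deriv1(2)[OF g(2)]]) (auto intro!: derivative_eq_intros)
      then show ?thesis unfolding g(1) using DERIV_cmult by (metis mult.assoc mult.commute)
    qed
    moreover have "(\<lambda>t. (c * a) * deriv1 f (a * t + b)) \<in> ?F"
      using Cinf1_deriv1[OF g(2)] by blast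
    ultimately show "\<exists>g'\<in>?F. \<forall>x. (g has_real_derivative g' x) (at x)"
      by (intro bexI[of _ "\<lambda>t. (c * a) * deriv1 f (a * t + b)"]) auto
  qed
  moreover have "(\<lambda>t. 1 * f (a * t + b)) \<in> ?F" using assms by blast
  ultimately show ?thesis by auto
qed

lemma tendsto_power_mult_exp_neg_at_top:
  assumes "c > 0"
  shows "((\<lambda>t::real. t ^ k * exp (- c * t)) \<longlongrightarrow> 0) at_top"
proof -
  have "filterlim (\<lambda>t::real. c * t) at_top at_top"
    using assms by (intro filterlim_tendsto_pos_mult_at_top[OF tendsto_const]) (auto simp: filterlim_ident)
  from filterlim_compose[OF tendsto_power_div_exp_0 this]
  have "((\<lambda>t. (c * t) ^ k / exp (c * t)) \<longlongrightarrow> 0) at_top" by simp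
  then have "((\<lambda>t. (c * t) ^ k / exp (c * t) / c ^ k) \<longlongrightarrow> 0 / c ^ k) at_top"
    by (intro tendsto_divide) (use assms in auto)
  moreover have "(c * t) ^ k / exp (c * t) / c ^ k = t ^ k * exp (- c * t)" for t
    using assms by (simp add: power_mult_distrib exp_minus field_simps)
  ultimately show ?thesis by simp
qed

lemma tendsto_poly_mult_exp_neg_at_top:
  assumes "c > 0"
  shows "((\<lambda>t::real. poly p t * exp (- c * t) * t) \<longlongrightarrow> 0) at_top"
proof -
  have "poly p t * exp (- c * t) * t = (\<Sum>i\<le>degree p. coeff p i * (t ^ Suc i * exp (- c * t)))" for t
    by (simp add: poly_altdef sum_distrib_right sum_distrib_left algebra_simps)
  moreover have "((\<lambda>t. \<Sum>i\<le>degree p. coeff p i * (t ^ Suc i * exp (- c * t))) \<longlongrightarrow> 0) at_top"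
    by (intro tendsto_null_sum tendsto_mult_right_zero tendsto_power_mult_exp_neg_at_top assms)
  ultimately show ?thesis by simp
qed

text \<open>All derivatives of \<open>s \<mapsto> exp (-c/s)\<close> (extended by \<open>0\<close> for \<open>s \<le> 0\<close>) have the form
  \<open>s \<mapsto> p (1/s) exp (-c/s)\<close> for a polynomial \<open>p\<close>, and each such function is differentiable at \<open>0\<close>
  with derivative \<open>0\<close> because \<open>exp (-c/s)\<close> beats every power of \<open>1/s\<close>.\<close>

definition poly_inv_exp :: "real \<Rightarrow> real poly \<Rightarrow> real \<Rightarrow> real" where
  "poly_inv_exp c p s = (if s > 0 then poly p (1 / s) * exp (- c / s) else 0)"

definition poly_inv_exp_deriv :: "real \<Rightarrow> real poly \<Rightarrow> real poly" where
  "poly_inv_exp_deriv c p = [:0, 0, 1:] * (smult c p - pderiv p)"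

lemma poly_inv_exp_has_real_derivative_pos:
  assumes "x > 0"
  shows "(poly_inv_exp c p has_real_derivative poly_inv_exp c (poly_inv_exp_deriv c p) x) (at x)"
proof -
  have inv: "((\<lambda>s. 1 / s) has_real_derivative - 1 / x\<^sup>2) (at x)"
    using assms DERIV_inverse[of x] by (simp add: inverse_eq_divide power2_eq_square)
  have deriv: "((\<lambda>s. poly p (1 / s) * exp (- c / s)) has_real_derivative
      poly (pderiv p) (1 / x) * (- 1 / x\<^sup>2) * exp (- c / x) + exp (- c / x) * (c / x\<^sup>2) * poly p (1 / x))
      (at x)"
  proof (rule DERIV_mult)
    show "((\<lambda>s. poly p (1 / s)) has_real_derivative poly (pderiv p) (1 / x) * (- 1 / x\<^sup>2)) (at x)"
      by (rule DERIV_chain2[OF poly_DERIV inv])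
    have "((\<lambda>s. - c / s) has_real_derivative c / x\<^sup>2) (at x)"
      using DERIV_cmult[OF inv, of "- c"] by (simp add: divide_simps)
    then show "((\<lambda>s. exp (- c / s)) has_real_derivative exp (- c / x) * (c / x\<^sup>2)) (at x)"
      by (rule DERIV_chain2[OF DERIV_exp])
  qed
  have eq: "poly (pderiv p) (1 / x) * (- 1 / x\<^sup>2) * exp (- c / x)
      + exp (- c / x) * (c / x\<^sup>2) * poly p (1 / x) = poly_inv_exp c (poly_inv_exp_deriv c p) x"
  proof -
    have e: "- 1 / x\<^sup>2 = - ((1 / x)\<^sup>2)" "c / x\<^sup>2 = c * (1 / x)\<^sup>2"
      by (simp_all add: power_divide)
    have "poly_inv_exp c (poly_inv_exp_deriv c p) x
        = poly ([:0, 0, 1:] * (smult c p - pderiv p)) (1 / x) * exp (- c / x)"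
      using assms by (simp add: poly_inv_exp_def poly_inv_exp_deriv_def)
    moreover have "poly [:0, 0, 1:] y = y * y" for y :: real by simp
    moreover have "d * - (y\<^sup>2) * E + E * (c * y\<^sup>2) * q = (y * y) * (c * q - d) * E" for d q y E :: real
      by (simp add: algebra_simps power2_eq_square)
    ultimately show ?thesis unfolding e poly_mult poly_diff poly_smult by simp
  qed
  from deriv[unfolded eq] show ?thesis
    by (rule has_field_derivative_transform_within_open[where S="{0<..}"])
      (use assms in \<open>auto simp: poly_inv_exp_def\<close>)
qed

lemma poly_inv_exp_has_real_derivative_0:
  assumes "c > 0"
  shows "(poly_inv_exp c p has_real_derivative 0) (at 0)"
proof -
  have "((\<lambda>y. (poly_inv_exp c p y - poly_inv_exp c p 0) / (y - 0)) \<longlongrightarrow> 0) (at 0)"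
  proof (rule filterlim_split_at)
    have "\<forall>\<^sub>F y in at_left (0::real). y < 0"
      by (simp add: eventually_at_left_field) (auto intro: exI[of _ "-1"])
    then show "((\<lambda>y. (poly_inv_exp c p y - poly_inv_exp c p 0) / (y - 0)) \<longlongrightarrow> 0) (at_left 0)"
      by (intro tendsto_eventually) (auto elim!: eventually_mono simp: poly_inv_exp_def)
    have "\<forall>\<^sub>F t in at_top. poly p t * exp (- c * t) * t
        = (poly_inv_exp c p (inverse t) - poly_inv_exp c p 0) / (inverse t - 0)"
      by (rule eventually_mono[OF eventually_gt_at_top[of 0]])
        (simp add: poly_inv_exp_def divide_inverse)
    with tendsto_poly_mult_exp_neg_at_top[OF assms]
    have "((\<lambda>t. (poly_inv_exp c p (inverse t) - poly_inv_exp c p 0) / (inverse t - 0)) \<longlongrightarrow> 0) at_top"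
      by (rule Lim_transform_eventually)
    then show "((\<lambda>y. (poly_inv_exp c p y - poly_inv_exp c p 0) / (y - 0)) \<longlongrightarrow> 0) (at_right 0)"
      unfolding filterlim_at_right_to_top .
  qed
  then show ?thesis by (simp add: has_field_derivative_iff)
qed

lemma poly_inv_exp_has_real_derivative:
  assumes "c > 0"
  shows "(poly_inv_exp c p has_real_derivative poly_inv_exp c (poly_inv_exp_deriv c p) x) (at x)"
proof -
  consider "x > 0" | "x < 0" | "x = 0" by linarith
  then show ?thesis
  proof cases
    case 1
    then show ?thesis by (rule poly_inv_exp_has_real_derivative_pos)
  next
    case 2
    have "((\<lambda>_. 0) has_real_derivative 0) (at x)" by (rule DERIV_const)
    then have "(poly_inv_exp c p has_real_derivative 0) (at x)"
      by (rule has_field_derivative_transform_within_open[where S="{..<0}"])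
        (use 2 in \<open>auto simp: poly_inv_exp_def\<close>)
    then show ?thesis using 2 by (simp add: poly_inv_exp_def)
  next
    case 3
    then show ?thesis
      using poly_inv_exp_has_real_derivative_0[OF assms] by (simp add: poly_inv_exp_def)
  qed
qed

definition flat_exp :: "real \<Rightarrow> real \<Rightarrow> real" where
  "flat_exp c s = (if s > 0 then exp (- c / s) else 0)"

lemma flat_exp_Cinf1:
  assumes "c > 0"
  shows "flat_exp c \<in> Cinf1"
proof -
  have "range (poly_inv_exp c) \<subseteq> Cinf1"
    by (rule Cinf1_coinduct) (use poly_inv_exp_has_real_derivative[OF assms] in blast)
  moreover have "poly_inv_exp c 1 = flat_exp c"
    by (rule ext) (simp add: poly_inv_exp_def flat_exp_def)
  ultimately show ?thesis by (metis rangeI subsetD)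
qed

section \<open>Smooth bump functions on boxes\<close>

lemma Cinf_differentiable: "g \<in> Cinf \<Longrightarrow> g differentiable (at x)"
  unfolding Cinf_def by blast

lemma Cinf_continuous: "g \<in> Cinf \<Longrightarrow> continuous_on UNIV g"
  using Cinf_differentiable by (meson continuous_at_imp_continuous_on differentiable_imp_continuous_within)

lemma has_derivative_prod_coordinates:
  assumes "\<And>i. f i \<in> Cinf1"
  shows "((\<lambda>x::R4. \<Prod>i\<in>UNIV. f i (x $ i)) has_derivative
     (\<lambda>h. \<Sum>i\<in>UNIV. deriv1 (f i) (y $ i) * h $ i * (\<Prod>j\<in>UNIV - {i}. f j (y $ j)))) (at y)"
proof (rule has_derivative_prod)
  fix i
  have "((\<lambda>x::R4. x $ i) has_derivative (\<lambda>h. h $ i)) (at y)"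
    by (rule bounded_linear_imp_has_derivative) (rule bounded_linear_vec_nth)
  moreover have "(f i has_derivative (*) (deriv1 (f i) (y $ i))) (at (y $ i))"
    by (rule has_field_derivative_imp_has_derivative[OF Cinf1_deriv1(2)[OF assms]])
  ultimately show "((\<lambda>x. f i (x $ i)) has_derivative (\<lambda>h. deriv1 (f i) (y $ i) * h $ i)) (at y)"
    by (rule has_derivative_compose)
qed

lemma pd_prod_coordinates:
  assumes "\<And>i. f i \<in> Cinf1"
  shows "pd k (\<lambda>x::R4. \<Prod>i\<in>UNIV. f i (x $ i)) y = (\<Prod>i\<in>UNIV. (f(k := deriv1 (f k))) i (y $ i))"
proof -
  have "pd k (\<lambda>x::R4. \<Prod>i\<in>UNIV. f i (x $ i)) y =
     (\<Sum>i\<in>UNIV. deriv1 (f i) (y $ i) * (axis k 1 :: R4) $ i * (\<Prod>j\<in>UNIV - {i}. f j (y $ j)))"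
    unfolding pd_def frechet_derivative_at[OF has_derivative_prod_coordinates[OF assms], symmetric] ..
  also have "\<dots> = (\<Sum>i\<in>UNIV. if i = k then deriv1 (f k) (y $ k) * (\<Prod>j\<in>UNIV - {k}. f j (y $ j)) else 0)"
    by (rule sum.cong) (auto simp: axis_def)
  also have "\<dots> = deriv1 (f k) (y $ k) * (\<Prod>j\<in>UNIV - {k}. f j (y $ j))"
    by simp
  also have "\<dots> = (\<Prod>i\<in>UNIV. (f(k := deriv1 (f k))) i (y $ i))"
    by (simp add: prod.remove[of UNIV k])
  finally show ?thesis .
qed

lemma prod_coordinates_Cinf:
  assumes "\<And>i. f i \<in> Cinf1"
  shows "(\<lambda>x::R4. \<Prod>i\<in>UNIV. f i (x $ i)) \<in> Cinf"
proof -
  let ?Q = "{(\<lambda>x::R4. \<Prod>i\<in>UNIV. f i (x $ i)) | f. \<forall>i. f i \<in> Cinf1}"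
  have "\<forall>g\<in>?Q. (\<forall>x. g differentiable (at x)) \<and> (\<forall>i. pd i g \<in> ?Q)"
  proof
    fix g assume "g \<in> ?Q"
    then obtain f where g: "g = (\<lambda>x::R4. \<Prod>i\<in>UNIV. f i (x $ i))" "\<And>i. f i \<in> Cinf1" by blast
    have "g differentiable (at x)" for x
      unfolding g(1) differentiable_def using has_derivative_prod_coordinates[of f x, OF g(2)] by blast
    moreover have "pd k g \<in> ?Q" for k
    proof -
      have "pd k g = (\<lambda>y. \<Prod>i\<in>UNIV. (f(k := deriv1 (f k))) i (y $ i))"
        unfolding g(1) by (rule ext) (rule pd_prod_coordinates[OF g(2)])
      moreover have "\<forall>i. (f(k := deriv1 (f k))) i \<in> Cinf1" using g(2) Cinf1_deriv1(1)[OF g(2)] by auto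
      ultimately show ?thesis by blast
    qed
    ultimately show "(\<forall>x. g differentiable (at x)) \<and> (\<forall>i. pd i g \<in> ?Q)" by blast
  qed
  then have "?Q \<subseteq> Cinf" unfolding Cinf_def by blast
  then show ?thesis using assms by blast
qed

definition bump1 :: "real \<Rightarrow> real \<Rightarrow> real \<Rightarrow> real \<Rightarrow> real" where
  "bump1 c al be t = flat_exp c (t - al) * flat_exp c (be - t)"

definition bump :: "real \<Rightarrow> R4 \<Rightarrow> R4 \<Rightarrow> R4 \<Rightarrow> real" where
  "bump c al be x = (\<Prod>i\<in>UNIV. bump1 c (al $ i) (be $ i) (x $ i))"

lemma bump1_Cinf1:
  assumes "c > 0"
  shows "bump1 c al be \<in> Cinf1"
proof -
  have "(\<lambda>t. flat_exp c (1 * t + (- al))) \<in> Cinf1" "(\<lambda>t. flat_exp c ((- 1) * t + be)) \<in> Cinf1"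
    by (rule Cinf1_affine_comp[OF flat_exp_Cinf1[OF assms]])+
  from Cinf1_mult[OF this] show ?thesis by (simp add: bump1_def[abs_def])
qed

lemma bump_Cinf: "c > 0 \<Longrightarrow> bump c al be \<in> Cinf"
  unfolding bump_def[abs_def] by (rule prod_coordinates_Cinf) (rule bump1_Cinf1)

lemma bump1_eq: "bump1 c al be t = (if al < t \<and> t < be then exp (- c / (t - al)) * exp (- c / (be - t)) else 0)"
  by (auto simp: bump1_def flat_exp_def)

lemma bump_nonneg: "0 \<le> bump c al be x"
  unfolding bump_def bump1_eq by (intro prod_nonneg) auto

lemma bump_le_1:
  assumes "c \<ge> 0"
  shows "bump c al be x \<le> 1"
proof -
  have "bump1 c al be t \<le> 1" for al be t
    using assms by (auto simp: bump1_eq divide_nonneg_pos intro!: mult_le_one)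
  then show ?thesis unfolding bump_def by (intro prod_le_1) (auto simp: bump1_eq)
qed

lemma bump_nonzero_iff: "bump c al be x \<noteq> 0 \<longleftrightarrow> x \<in> box al be"
  by (auto simp: bump_def bump1_eq mem_box_cart)

lemma bump_tendsto_indicator:
  "(\<lambda>n. bump (1 / real (Suc n)) al be x) \<longlonglongrightarrow> indicator (box al be) x"
proof (cases "x \<in> box al be")
  case True
  have "(\<lambda>n. \<Prod>i\<in>UNIV. bump1 (1 / real (Suc n)) (al $ i) (be $ i) (x $ i)) \<longlonglongrightarrow> (\<Prod>i\<in>(UNIV::4 set). 1)"
  proof (rule tendsto_prod)
    fix i :: 4
    have lt: "al $ i < x $ i" "x $ i < be $ i" using True by (auto simp: mem_box_cart)
    have "(\<lambda>n. exp (- (1 / real (Suc n)) / (x $ i - al $ i)) * exp (- (1 / real (Suc n)) / (be $ i - x $ i)))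
        \<longlonglongrightarrow> exp (- 0 / (x $ i - al $ i)) * exp (- 0 / (be $ i - x $ i))"
      by (intro tendsto_intros LIMSEQ_Suc[OF lim_const_over_n]) (use lt in auto)
    then show "(\<lambda>n. bump1 (1 / real (Suc n)) (al $ i) (be $ i) (x $ i)) \<longlonglongrightarrow> 1"
      using lt by (simp add: bump1_eq)
  qed
  then show ?thesis using True by (simp add: bump_def)
next
  case False
  then show ?thesis using bump_nonzero_iff[of _ al be x] by simp
qed

lemma bump_Cc_inf:
  assumes "c > 0" "box al be \<noteq> {}" "cbox al be \<subseteq> U"
  shows "bump c al be \<in> Cc_inf U"
proof -
  have "{x. bump c al be x \<noteq> 0} = box al be" using bump_nonzero_iff by blast
  then have "closure {x. bump c al be x \<noteq> 0} = cbox al be" using assms(2) by simp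
  then show ?thesis unfolding Cc_inf_def mem_Collect_eq
    using bump_Cinf[OF assms(1)] assms(3) compact_cbox by metis
qed

section \<open>The fundamental lemma of the calculus of variations\<close>

lemma abs_le_square_plus_1: "\<bar>x :: real\<bar> \<le> x\<^sup>2 + 1"
  using zero_le_power2[of "\<bar>x\<bar> - 1"] by (simp add: power2_diff power2_abs)

lemma L2_integrable_indicator_mult:
  assumes "L2 h" "S \<in> sets lborel" "emeasure lborel S < \<infinity>"
  shows "integrable lborel (\<lambda>x. indicator S x * h x)"
proof (rule Bochner_Integration.integrable_bound)
  show "integrable lborel (\<lambda>x. (h x)\<^sup>2 + indicator S x)"
    using assms by (intro Bochner_Integration.integrable_add) (auto simp: L2_def)
  show "(\<lambda>x. indicator S x * h x) \<in> borel_measurable lborel"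
    using assms by (auto simp: L2_def)
  show "AE x in lborel. norm (indicator S x * h x) \<le> norm ((h x)\<^sup>2 + indicator S x)"
    using abs_le_square_plus_1 by (intro AE_I2) (auto simp: indicator_def)
qed

text \<open>The bumps \<open>bump (1/(n+1)) al be\<close> are test functions on \<open>U\<close> that converge boundedly to the
  indicator of the box, so dominated convergence carries the orthogonality over to it.\<close>

lemma integral_box_eq_0_if_orthogonal_Cc_inf:
  assumes h: "L2 h" and orth: "\<forall>\<phi>\<in>Cc_inf U. (\<integral>x. h x * \<phi> x \<partial>lborel) = 0"
    and box: "box al be \<noteq> {}" "cbox al be \<subseteq> U"
  shows "(\<integral>x. h x * indicator (box al be) x \<partial>lborel) = 0"
proof -
  let ?s = "\<lambda>n x. h x * bump (1 / real (Suc n)) al be x"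
  have hm: "h \<in> borel_measurable lborel" using h by (simp add: L2_def)
  have "(\<lambda>n. integral\<^sup>L lborel (?s n)) \<longlonglongrightarrow> (\<integral>x. h x * indicator (box al be) x \<partial>lborel)"
  proof (rule integral_dominated_convergence[where w="\<lambda>x. indicator (cbox al be) x * \<bar>h x\<bar>"])
    show "(\<lambda>x. h x * indicator (box al be) x) \<in> borel_measurable lborel" using hm by simp
    show "?s n \<in> borel_measurable lborel" for n
      using hm borel_measurable_continuous_onI[OF Cinf_continuous[OF bump_Cinf]]
      by (simp add: measurable_lborel1)
    have "integrable lborel (\<lambda>x. indicator (cbox al be) x * h x)"
      by (rule L2_integrable_indicator_mult[OF h _ emeasure_lborel_cbox_finite]) simp
    from integrable_abs[OF this]
    show "integrable lborel (\<lambda>x. indicator (cbox al be) x * \<bar>h x\<bar>)" by (simp add: abs_mult)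
    show "AE x in lborel. (\<lambda>n. ?s n x) \<longlonglongrightarrow> h x * indicator (box al be) x"
      by (intro AE_I2 tendsto_mult_left bump_tendsto_indicator)
    show "AE x in lborel. norm (?s n x) \<le> indicator (cbox al be) x * \<bar>h x\<bar>" for n
    proof (rule AE_I2)
      fix x
      have "0 \<le> bump (1 / real (Suc n)) al be x" "bump (1 / real (Suc n)) al be x \<le> 1"
        by (rule bump_nonneg, rule bump_le_1) simp
      then show "norm (?s n x) \<le> indicator (cbox al be) x * \<bar>h x\<bar>"
        using bump_nonzero_iff[of _ al be x] box_subset_cbox[of al be]
        by (cases "x \<in> box al be") (auto simp: abs_mult mult_left_le)
    qed
  qed
  moreover have "integral\<^sup>L lborel (?s n) = 0" for n
    using orth bump_Cc_inf[OF _ box] by simp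
  ultimately show ?thesis by (simp add: LIMSEQ_const_iff)
qed

lemma box_Int_box_cart:
  "box (a :: R4) b \<inter> box c d = box (\<chi> i. max (a $ i) (c $ i)) (\<chi> i. min (b $ i) (d $ i))"
  by (auto simp: mem_box_cart)

text \<open>Restricted to the box, \<open>h\<close> integrates to zero over every sub-box, hence, boxes being an
  intersection-stable generator of the Borel sets, over every Borel set.\<close>

lemma AE_zero_on_box_if_orthogonal_Cc_inf:
  assumes h: "L2 h" and orth: "\<forall>\<phi>\<in>Cc_inf U. (\<integral>x. h x * \<phi> x \<partial>lborel) = 0"
    and box: "box al be \<noteq> {}" "cbox al be \<subseteq> U"
  shows "AE x in lborel. x \<in> box al be \<longrightarrow> h x = 0"
proof -
  define g where "g x = h x * indicator (box al be) x" for x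
  have gi: "integrable lborel g"
    using L2_integrable_indicator_mult[OF h _ emeasure_lborel_box_finite]
    unfolding g_def by (simp add: mult.commute)
  have boxes: "(LINT x:box a b|lborel. g x) = 0" for a b
  proof -
    define a' :: R4 where "a' = (\<chi> i. max (a $ i) (al $ i))"
    define b' :: R4 where "b' = (\<chi> i. min (b $ i) (be $ i))"
    have e: "indicator (box a b) x *\<^sub>R g x = h x * indicator (box a' b') x" for x
      using box_Int_box_cart[of a b al be] unfolding g_def a'_def b'_def
      by (auto simp: indicator_def)
    show ?thesis
    proof (cases "box a' b' = {}")
      case True
      then show ?thesis unfolding set_lebesgue_integral_def e by simp
    next
      case False
      have "box a' b' \<subseteq> box al be" using box_Int_box_cart[of a b al be] a'_def b'_def by auto
      then have "cbox a' b' \<subseteq> U"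
        using closure_mono[of "box a' b'" "box al be"] box False by simp
      from integral_box_eq_0_if_orthogonal_Cc_inf[OF h orth False this]
      show ?thesis unfolding set_lebesgue_integral_def e .
    qed
  qed
  let ?G = "range (\<lambda>(a, b). box a b :: R4 set)"
  have sets_lborel: "sets lborel = sigma_sets UNIV ?G"
    by (simp add: borel_eq_box[where 'a=R4] sets_measure_of)
  have "(LINT x:A|lborel. g x) = 0" if "A \<in> sets lborel" for A
  proof -
    have "Int_stable ?G"
      unfolding Int_stable_def using box_Int_box_cart by auto
    moreover have "?G \<subseteq> Pow UNIV" by simp
    moreover have "A \<in> sigma_sets UNIV ?G" using that sets_lborel by simp
    ultimately show ?thesis
    proof (induction rule: sigma_sets_induct_disjoint)
      case (basic A)
      then show ?case using boxes by auto
    next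
      case empty
      then show ?case by (simp add: set_lebesgue_integral_def)
    next
      case (compl A)
      have Am: "A \<in> sets lborel" using compl(1) sets_lborel by simp
      have "(LINT x:UNIV - A|lborel. g x) = (\<integral>x. g x - indicator A x * g x \<partial>lborel)"
        unfolding set_lebesgue_integral_def
        by (rule Bochner_Integration.integral_cong) (auto simp: indicator_def)
      also have "\<dots> = (\<integral>x. g x \<partial>lborel) - (\<integral>x. indicator A x * g x \<partial>lborel)"
        by (rule Bochner_Integration.integral_diff[OF gi integrable_mult_indicator[OF Am gi, simplified]])
      also have "(\<integral>x. g x \<partial>lborel) = 0"
        unfolding g_def by (rule integral_box_eq_0_if_orthogonal_Cc_inf[OF h orth box])
      also have "(\<integral>x. indicator A x * g x \<partial>lborel) = 0"
        using compl(2) by (simp add: set_lebesgue_integral_def)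
      finally show ?case by simp
    next
      case (union A)
      have Am: "\<And>i. A i \<in> sets lborel" using union(2) sets_lborel by auto
      have "(LINT x:(\<Union>i. A i)|lborel. g x) = (\<Sum>i. (LINT x:(A i)|lborel. g x))"
      proof (rule lebesgue_integral_countable_add)
        show "A i \<inter> A j = {}" if "i \<noteq> j" for i j
          using union(1) that by (auto simp: disjoint_family_on_def)
        show "set_integrable lborel (\<Union>i. A i) g"
          unfolding set_integrable_def using Am by (intro integrable_mult_indicator gi) auto
      qed (use Am in auto)
      then show ?case using union(3) by simp
    qed
  qed
  then have "AE x in lborel. g x = 0"
    by (intro density_unique_real[OF gi integrable_zero]) (auto simp: set_lebesgue_integral_def)
  then show ?thesis by (auto elim!: eventually_mono simp: g_def)
qed

lemma AE_zero_on_open_if_orthogonal_Cc_inf: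
  assumes U: "open U" and h: "L2 h" and orth: "\<forall>\<phi>\<in>Cc_inf U. (\<integral>x. h x * \<phi> x \<partial>lborel) = 0"
  shows "AE x in lborel. x \<in> U \<longrightarrow> h x = 0"
proof -
  obtain D where D: "countable D" "D \<subseteq> Pow U" "\<And>X. X \<in> D \<Longrightarrow> \<exists>a b. X = cbox a b" "\<Union>D = U"
    using open_countable_Union_open_cbox[OF U] by metis
  have "AE x in lborel. x \<in> X \<longrightarrow> h x = 0" if "X \<in> D" for X
  proof -
    obtain a b where X: "X = cbox a b" using D(3)[OF \<open>X \<in> D\<close>] by blast
    have "cbox a b \<subseteq> U" using D(2) \<open>X \<in> D\<close> X by auto
    moreover have "AE x in lborel. x \<notin> cbox a b - box a b"
      by (rule AE_I'[OF null_sets_cbox_Diff_box]) auto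
    ultimately show ?thesis
      using AE_zero_on_box_if_orthogonal_Cc_inf[OF h orth, of a b] unfolding X
      by (cases "box a b = {}") (auto elim!: eventually_mono eventually_rev_mp)
  qed
  then have "AE x in lborel. \<forall>X\<in>D. x \<in> X \<longrightarrow> h x = 0"
    by (rule AE_ball_countable'[OF _ D(1)])
  then show ?thesis using D(4) by (auto elim!: eventually_mono)
qed

section \<open>The boundary of a smooth domain is a null set\<close>

lemma inj_add_coordinate_correction:
  fixes r' :: "R4 \<Rightarrow> real"
  assumes "linear r'" "r' (axis i 1) \<noteq> 0"
  shows "inj (\<lambda>h. h + (r' h - h $ i) *\<^sub>R axis i 1)"
proof (rule injI)
  fix h1 h2 :: R4
  assume eq: "h1 + (r' h1 - h1 $ i) *\<^sub>R axis i 1 = h2 + (r' h2 - h2 $ i) *\<^sub>R axis i 1"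
  define d where "d = h1 - h2"
  have "h1 $ k = h2 $ k" if "k \<noteq> i" for k
    using arg_cong[OF eq, of "\<lambda>v. v $ k"] that by (simp add: axis_def)
  then have d_axis: "d = (d $ i) *\<^sub>R axis i 1"
    by (auto simp: vec_eq_iff d_def axis_def)
  have "r' h1 = r' h2"
    using arg_cong[OF eq, of "\<lambda>v. v $ i"] by (simp add: axis_def)
  then have "0 = r' d" using assms(1) by (simp add: d_def linear_diff)
  also have "\<dots> = d $ i * r' (axis i 1)"
    by (subst d_axis) (simp add: linear_scale[OF assms(1)])
  finally have "d = 0" using assms(2) d_axis by simp
  then show "h1 = h2" by (simp add: d_def)
qed

text \<open>Near a point where \<open>\<partial>\<^sub>i\<rho> \<noteq> 0\<close>, replacing the \<open>i\<close>-th coordinate by \<open>\<rho>\<close> is a map with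
  injective derivative that sends \<open>{\<rho> = 0}\<close> into the hyperplane \<open>{x\<^sub>i = 0}\<close>.\<close>

lemma negligible_regular_zero_set:
  fixes \<rho> :: "R4 \<Rightarrow> real"
  assumes \<rho>: "\<rho> \<in> Cinf" and regular: "\<forall>x\<in>S. \<exists>i. pd i \<rho> x \<noteq> 0"
  shows "negligible {x\<in>S. \<rho> x = 0}"
proof -
  define F :: "4 \<Rightarrow> R4 \<Rightarrow> R4" where "F i x = x + (\<rho> x - x $ i) *\<^sub>R axis i 1" for i x
  define S' where "S' i = {x\<in>S. pd i \<rho> x \<noteq> 0}" for i
  have "negligible {x\<in>S' i. F i x \<in> {y. axis i 1 \<bullet> y = 0}}" for i
  proof (rule negligible_differentiable_vimage)
    show "negligible {y::R4. axis i 1 \<bullet> y = 0}"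
      by (rule negligible_hyperplane) (simp add: axis_eq_0_iff)
    fix x assume x: "x \<in> S' i"
    define r' where "r' = frechet_derivative \<rho> (at x)"
    have dr: "(\<rho> has_derivative r') (at x)"
      unfolding r'_def using Cinf_differentiable[OF \<rho>] frechet_derivative_works by blast
    have "((\<lambda>x::R4. x $ i) has_derivative (\<lambda>h. h $ i)) (at x)"
      by (rule bounded_linear_imp_has_derivative) (rule bounded_linear_vec_nth)
    from has_derivative_diff[OF dr this]
    have "((\<lambda>x. (\<rho> x - x $ i) *\<^sub>R (axis i 1 :: R4)) has_derivative (\<lambda>h. (r' h - h $ i) *\<^sub>R axis i 1)) (at x)"
      by (rule bounded_linear.has_derivative[OF bounded_linear_scaleR_left])
    from has_derivative_add[OF has_derivative_ident this]
    show "(F i has_derivative (\<lambda>h. h + (r' h - h $ i) *\<^sub>R axis i 1)) (at x within S' i)"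
      unfolding F_def[abs_def] by (rule has_derivative_at_withinI)
    show "inj (\<lambda>h. h + (r' h - h $ i) *\<^sub>R axis i 1)"
      using x has_derivative_linear[OF dr]
      by (intro inj_add_coordinate_correction) (simp_all add: S'_def pd_def r'_def)
  qed
  then have "negligible (\<Union>i. {x\<in>S' i. F i x \<in> {y. axis i 1 \<bullet> y = 0}})"
    by (intro negligible_Union) auto
  moreover have "{x\<in>S. \<rho> x = 0} \<subseteq> (\<Union>i. {x\<in>S' i. F i x \<in> {y. axis i 1 \<bullet> y = 0}})"
    using regular by (auto simp: S'_def F_def inner_axis')
  ultimately show ?thesis using negligible_subset by blast
qed

lemma negligible_frontier_smooth_domain:
  assumes \<Omega>: "smooth_domain \<Omega>"
  shows "negligible (frontier \<Omega>)"
proof (rule locally_negligible_alt[THEN iffD2], rule ballI)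
  fix p assume p: "p \<in> frontier \<Omega>"
  have "\<exists>r>0. \<exists>\<rho>\<in>Cinf. (\<forall>x\<in>ball p r. \<exists>i. pd i \<rho> x \<noteq> 0) \<and> \<Omega> \<inter> ball p r = {x\<in>ball p r. \<rho> x < 0}"
    using \<Omega> p unfolding smooth_domain_def by blast
  then obtain r \<rho> where r: "r > 0" "\<rho> \<in> Cinf" "\<forall>x\<in>ball p r. \<exists>i. pd i \<rho> x \<noteq> 0"
     "\<Omega> \<inter> ball p r = {x\<in>ball p r. \<rho> x < 0}"
    by blast
  have "open \<Omega>" using \<Omega> by (simp add: smooth_domain_def)
  have "frontier \<Omega> \<inter> ball p r \<subseteq> {x\<in>ball p r. \<rho> x = 0}"
  proof
    fix x assume x: "x \<in> frontier \<Omega> \<inter> ball p r"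
    then have "x \<notin> \<Omega>" using \<open>open \<Omega>\<close> by (simp add: frontier_def interior_open)
    then have "x \<notin> {y\<in>ball p r. \<rho> y < 0}" using r(4) by blast
    then have "\<rho> x \<ge> 0" using x by simp
    have "x \<in> closure (\<Omega> \<inter> ball p r)"
      using x open_Int_closure_subset[OF open_ball, of p r \<Omega>] by (auto simp: frontier_def Int_commute)
    moreover have "closure (\<Omega> \<inter> ball p r) \<subseteq> {y. \<rho> y \<le> 0}"
    proof (rule closure_minimal)
      show "\<Omega> \<inter> ball p r \<subseteq> {y. \<rho> y \<le> 0}" using r(4) by auto
      show "closed {y. \<rho> y \<le> 0}"
        using Cinf_continuous[OF r(2)] by (intro closed_Collect_le continuous_on_const)
    qed
    ultimately show "x \<in> {x\<in>ball p r. \<rho> x = 0}" using \<open>\<rho> x \<ge> 0\<close> x by auto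
  qed
  then have "negligible (frontier \<Omega> \<inter> ball p r)"
    using negligible_regular_zero_set[OF r(2,3)] negligible_subset by blast
  then show "\<exists>U. openin (top_of_set (frontier \<Omega>)) U \<and> p \<in> U \<and> negligible U"
    using p r(1) by (intro exI[of _ "frontier \<Omega> \<inter> ball p r"]) (auto simp: openin_open_Int)
qed

lemma AE_not_in_frontier_smooth_domain:
  assumes "smooth_domain \<Omega>"
  shows "AE x in lborel. x \<notin> frontier \<Omega>"
proof -
  have "frontier \<Omega> \<in> null_sets lebesgue"
    using negligible_frontier_smooth_domain[OF assms] by (simp add: negligible_iff_null_sets)
  then have "AE x in lebesgue. x \<notin> frontier \<Omega>" by (rule AE_I') auto
  then show ?thesis by (simp add: AE_completion_iff)
qed

section \<open>Functions in \<open>H\<^sup>1\<close> and \<open>H\<^sup>1\<^sub>0\<close>\<close>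

lemma Cc_inf_UNIV: "\<phi> \<in> Cc_inf U \<Longrightarrow> \<phi> \<in> Cc_inf UNIV"
  by (simp add: Cc_inf_def)

lemma Cc_inf_zero_outside:
  assumes "\<phi> \<in> Cc_inf U" "x \<notin> U"
  shows "\<phi> x = 0"
  using assms closure_subset[of "{y. \<phi> y \<noteq> 0}"] by (auto simp: Cc_inf_def)

lemma pd_zero_outside_support:
  assumes "\<phi> \<in> Cinf" "x \<notin> closure {y. \<phi> y \<noteq> 0}"
  shows "pd i \<phi> x = 0"
proof -
  have "(\<phi> has_derivative (\<lambda>_. 0)) (at x)"
  proof (rule has_derivative_transform_within_open[OF has_derivative_const])
    show "open (- closure {y. \<phi> y \<noteq> 0})" by auto
    show "x \<in> - closure {y. \<phi> y \<noteq> 0}" using assms(2) by simp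
    show "0 = \<phi> y" if "y \<in> - closure {y. \<phi> y \<noteq> 0}" for y
      using that closure_subset[of "{y. \<phi> y \<noteq> 0}"] by auto
  qed
  then show ?thesis by (simp add: pd_def frechet_derivative_at[symmetric])
qed

lemma Cc_inf_bounded:
  assumes "\<phi> \<in> Cc_inf U"
  obtains M where "\<And>x. \<bar>\<phi> x\<bar> \<le> M"
proof -
  let ?K = "closure {y. \<phi> y \<noteq> 0}"
  have K: "compact ?K" "\<phi> \<in> Cinf" using assms by (auto simp: Cc_inf_def)
  have "compact (\<phi> ` ?K)"
    by (rule compact_continuous_image[OF continuous_on_subset[OF Cinf_continuous[OF K(2)]] K(1)]) simp
  then have "bounded (\<phi> ` ?K)" by (rule compact_imp_bounded)
  then obtain M where M: "\<forall>y\<in>\<phi> ` ?K. norm y \<le> M" unfolding bounded_iff ..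
  have "\<bar>\<phi> x\<bar> \<le> max M 0" for x
    using M closure_subset[of "{y. \<phi> y \<noteq> 0}"] by (cases "x \<in> ?K") force+
  then show ?thesis by (rule that)
qed

lemma Cc_inf_L2:
  assumes "\<phi> \<in> Cc_inf U"
  shows "L2 \<phi>"
proof -
  let ?K = "closure {y. \<phi> y \<noteq> 0}"
  have K: "compact ?K" "\<phi> \<in> Cinf" using assms by (auto simp: Cc_inf_def)
  obtain M where M: "\<And>x. \<bar>\<phi> x\<bar> \<le> M" using Cc_inf_bounded[OF assms] by blast
  have meas: "\<phi> \<in> borel_measurable lborel"
    using borel_measurable_continuous_onI[OF Cinf_continuous[OF K(2)]] by (simp add: measurable_lborel1)
  have "integrable lborel (\<lambda>x. (\<phi> x)\<^sup>2)"
  proof (rule Bochner_Integration.integrable_bound)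
    have "emeasure lborel ?K < \<infinity>"
      by (rule emeasure_bounded_finite[OF compact_imp_bounded[OF K(1)]])
    then show "integrable lborel (\<lambda>x. M\<^sup>2 * indicator ?K x)"
      using K(1) by (intro integrable_mult_right integrable_real_indicator) auto
    show "(\<lambda>x. (\<phi> x)\<^sup>2) \<in> borel_measurable lborel" using meas by simp
    have "(\<phi> x)\<^sup>2 \<le> M\<^sup>2 * indicator ?K x" for x
    proof (cases "x \<in> ?K")
      case True
      then show ?thesis using power_mono[OF M[of x], of 2] by simp
    next
      case False
      then show ?thesis using closure_subset[of "{y. \<phi> y \<noteq> 0}"] by auto
    qed
    then show "AE x in lborel. norm ((\<phi> x)\<^sup>2) \<le> norm (M\<^sup>2 * indicator ?K x)"
      by (intro AE_I2) simp
  qed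
  then show ?thesis using meas by (simp add: L2_def)
qed

lemma L2_integrable_diff_square:
  assumes "L2 f" "L2 g"
  shows "integrable lborel (\<lambda>x. (f x - g x)\<^sup>2)"
proof (rule Bochner_Integration.integrable_bound)
  show "integrable lborel (\<lambda>x. 2 * (f x)\<^sup>2 + 2 * (g x)\<^sup>2)"
    using assms by (auto simp: L2_def)
  show "(\<lambda>x. (f x - g x)\<^sup>2) \<in> borel_measurable lborel" using assms by (auto simp: L2_def)
  have "(f x - g x)\<^sup>2 \<le> 2 * (f x)\<^sup>2 + 2 * (g x)\<^sup>2" for x
    using zero_le_power2[of "f x + g x"] by (simp add: power2_eq_square algebra_simps)
  then show "AE x in lborel. norm ((f x - g x)\<^sup>2) \<le> norm (2 * (f x)\<^sup>2 + 2 * (g x)\<^sup>2)"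
    by (intro AE_I2) simp
qed

lemma H1_borel_measurable: "u \<in> H1 \<Longrightarrow> u \<in> borel_measurable lborel"
  by (simp add: H1_def L2_def)

lemma zero_in_H1: "(\<lambda>_. 0) \<in> H1"
proof -
  have "L2 (\<lambda>_::R4. 0::real)" "weak_grad (\<lambda>_. 0) (\<lambda>_. 0)"
    by (simp_all add: L2_def weak_grad_def)
  then show ?thesis unfolding H1_def by (auto intro!: exI[of _ "\<lambda>_. 0"])
qed

lemma
  assumes "u \<in> H1"
  shows L2_grad: "L2 (\<lambda>x. grad u x $ i)"
    and weak_grad_grad: "weak_grad u (grad u)"
proof -
  have "\<exists>g. (\<forall>i. L2 (\<lambda>x. g x $ i)) \<and> weak_grad u g" using assms by (simp add: H1_def)
  from someI_ex[OF this] show "L2 (\<lambda>x. grad u x $ i)" "weak_grad u (grad u)"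
    unfolding grad_def by blast+
qed

lemma borel_measurable_norm_grad_square:
  assumes "u \<in> H1"
  shows "(\<lambda>x. (norm (grad u x))\<^sup>2) \<in> borel_measurable lborel"
proof -
  have "(norm (grad u x))\<^sup>2 = (\<Sum>i\<in>UNIV. grad u x $ i * grad u x $ i)" for x
    by (simp add: power2_norm_eq_inner inner_vec_def)
  moreover have "(\<lambda>x. grad u x $ i) \<in> borel_measurable lborel" for i
    using L2_grad[OF assms] by (simp add: L2_def)
  ultimately show ?thesis by simp
qed

text \<open>Tested against \<open>\<phi> \<in> C\<^sub>c\<^sup>\<infinity>(U)\<close>, the product \<open>u \<cdot> \<partial>\<^sub>i\<phi>\<close> vanishes a.e., so the fundamental lemma
  applies to each component of the gradient.\<close>

lemma grad_AE_zero_where_zero: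
  assumes u: "u \<in> H1" and U: "open U" and zero: "AE x in lborel. x \<in> U \<longrightarrow> u x = 0"
  shows "AE x in lborel. x \<in> U \<longrightarrow> grad u x = 0"
proof -
  have "AE x in lborel. x \<in> U \<longrightarrow> grad u x $ i = 0" for i
  proof (rule AE_zero_on_open_if_orthogonal_Cc_inf[OF U L2_grad[OF u]], rule ballI)
    fix \<phi> assume \<phi>: "\<phi> \<in> Cc_inf U"
    have "AE x in lborel. u x * pd i \<phi> x = 0"
      using zero
    proof eventually_elim
      case (elim x)
      have "x \<notin> U \<Longrightarrow> x \<notin> closure {y. \<phi> y \<noteq> 0}" using \<phi> by (auto simp: Cc_inf_def)
      then show ?case using elim pd_zero_outside_support[of \<phi> x i] \<phi>
        by (cases "x \<in> U") (auto simp: Cc_inf_def)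
    qed
    then have "(\<integral>x. u x * pd i \<phi> x \<partial>lborel) = 0" by (rule integral_eq_zero_AE)
    then show "(\<integral>x. grad u x $ i * \<phi> x \<partial>lborel) = 0"
      using weak_grad_grad[OF u] Cc_inf_UNIV[OF \<phi>] unfolding weak_grad_def by force
  qed
  then have "AE x in lborel. \<forall>i\<in>UNIV. x \<in> U \<longrightarrow> grad u x $ i = 0"
    by (intro AE_finite_allI) auto
  then show ?thesis by (auto elim!: eventually_mono simp: vec_eq_iff)
qed

lemma grad_zero_AE: "AE x in lborel. grad (\<lambda>_. 0) x = 0"
  using grad_AE_zero_where_zero[OF zero_in_H1 open_UNIV] by simp

lemma H10_AE_zero_outside:
  assumes u: "u \<in> H10 \<Omega>" and \<Omega>: "\<Omega> \<in> sets lborel"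
  shows "AE x in lborel. x \<notin> \<Omega> \<longrightarrow> u x = 0"
proof -
  obtain \<phi> where \<phi>: "\<And>n. \<phi> n \<in> Cc_inf \<Omega>" "(\<lambda>n. H1norm_sq (\<lambda>x. \<phi> n x - u x)) \<longlonglongrightarrow> 0"
    using u unfolding H10_def by blast
  have L2u: "L2 u" using u by (simp add: H10_def H1_def)
  let ?F = "\<lambda>x. indicator (- \<Omega>) x * (u x)\<^sup>2"
  have F: "integrable lborel ?F"
  proof (rule Bochner_Integration.integrable_bound)
    show "integrable lborel (\<lambda>x. (u x)\<^sup>2)" using L2u by (simp add: L2_def)
    show "?F \<in> borel_measurable lborel" using L2u \<Omega> by (auto simp: L2_def)
    show "AE x in lborel. norm (?F x) \<le> norm ((u x)\<^sup>2)" by (rule AE_I2) (simp add: indicator_def)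
  qed
  have "integral\<^sup>L lborel ?F \<le> H1norm_sq (\<lambda>x. \<phi> n x - u x)" for n
  proof -
    have "integral\<^sup>L lborel ?F \<le> (\<integral>x. (\<phi> n x - u x)\<^sup>2 \<partial>lborel)"
    proof (rule integral_mono_AE')
      show "integrable lborel (\<lambda>x. (\<phi> n x - u x)\<^sup>2)"
        by (rule L2_integrable_diff_square[OF Cc_inf_L2[OF \<phi>(1)] L2u])
      show "AE x in lborel. ?F x \<le> (\<phi> n x - u x)\<^sup>2"
        using Cc_inf_zero_outside[OF \<phi>(1)] by (intro AE_I2) (simp add: indicator_def)
    qed simp
    also have "\<dots> \<le> H1norm_sq (\<lambda>x. \<phi> n x - u x)"
      unfolding H1norm_sq_def by (simp add: integral_nonneg_AE)
    finally show ?thesis .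
  qed
  then have "integral\<^sup>L lborel ?F \<le> 0"
    by (intro tendsto_lowerbound[OF \<phi>(2)] always_eventually) auto
  moreover have "integral\<^sup>L lborel ?F \<ge> 0" by (rule integral_nonneg_AE) simp
  ultimately have "AE x in lborel. ?F x = 0"
    using integral_nonneg_eq_0_iff_AE[OF F] by simp
  then show ?thesis by (auto elim!: eventually_mono simp: indicator_def)
qed

text \<open>Outside \<open>\<Omega>\<close> the gradient vanishes on the open set \<open>- closure \<Omega>\<close>; the rest is the frontier.\<close>

lemma H10_grad_AE_zero_outside:
  assumes \<Omega>: "smooth_domain \<Omega>" and u: "u \<in> H10 \<Omega>"
  shows "AE x in lborel. x \<notin> \<Omega> \<longrightarrow> grad u x = 0"
proof -
  have "open \<Omega>" using \<Omega> by (simp add: smooth_domain_def)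
  have "u \<in> H1" using u by (simp add: H10_def)
  have "AE x in lborel. x \<in> - closure \<Omega> \<longrightarrow> u x = 0"
    using H10_AE_zero_outside[OF u] \<open>open \<Omega>\<close> closure_subset[of \<Omega>]
    by (auto elim!: eventually_mono)
  from grad_AE_zero_where_zero[OF \<open>u \<in> H1\<close> open_Compl[OF closed_closure] this]
  have "AE x in lborel. x \<in> - closure \<Omega> \<longrightarrow> grad u x = 0" .
  with AE_not_in_frontier_smooth_domain[OF \<Omega>] show ?thesis
    by eventually_elim (use \<open>open \<Omega>\<close> in \<open>auto simp: frontier_def interior_open\<close>)
qed

section \<open>Comparing the Nehari levels\<close>

lemma Dq_H10_eq:
  assumes \<Omega>: "smooth_domain \<Omega>" and u: "u \<in> H10 \<Omega>"
    and a: "a \<in> borel_measurable lborel" "\<forall>x\<in>\<Omega>. a x = 0"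
  shows "Dq a c lam u = (\<integral>x\<in>\<Omega>. (norm (grad u x))\<^sup>2 + c * (u x)\<^sup>2 \<partial>lborel)"
proof -
  have "open \<Omega>" using \<Omega> by (simp add: smooth_domain_def)
  have uH: "u \<in> H1" using u by (simp add: H10_def)
  note meas = borel_measurable_norm_grad_square[OF uH] H1_borel_measurable[OF uH] a(1)
  show ?thesis
    unfolding Dq_def set_lebesgue_integral_def
  proof (rule integral_cong_AE)
    show "(\<lambda>x. (norm (grad u x))\<^sup>2 + (lam * a x + c) * (u x)\<^sup>2) \<in> borel_measurable lborel"
      using meas by measurable
    have "(\<lambda>x. (norm (grad u x))\<^sup>2 + c * (u x)\<^sup>2) \<in> borel_measurable lborel"
      using meas by measurable
    then show "(\<lambda>x. indicator \<Omega> x *\<^sub>R ((norm (grad u x))\<^sup>2 + c * (u x)\<^sup>2)) \<in> borel_measurable lborel"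
      using \<open>open \<Omega>\<close> by (intro borel_measurable_scaleR borel_measurable_indicator) auto
    have "\<Omega> \<in> sets lborel" using \<open>open \<Omega>\<close> by simp
    from H10_AE_zero_outside[OF u this] H10_grad_AE_zero_outside[OF \<Omega> u]
    show "AE x in lborel. (norm (grad u x))\<^sup>2 + (lam * a x + c) * (u x)\<^sup>2 =
        indicator \<Omega> x *\<^sub>R ((norm (grad u x))\<^sup>2 + c * (u x)\<^sup>2)"
      by eventually_elim (auto simp: a(2) indicator_def)
  qed
qed

lemma integral_power4_H10_eq:
  assumes \<Omega>: "\<Omega> \<in> sets lborel" and u: "u \<in> H10 \<Omega>"
  shows "(\<integral>x. (u x) ^ 4 \<partial>lborel) = (\<integral>x\<in>\<Omega>. (u x) ^ 4 \<partial>lborel)"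
  unfolding set_lebesgue_integral_def
proof (rule integral_cong_AE)
  have "u \<in> borel_measurable lborel" using u H1_borel_measurable by (simp add: H10_def)
  then show "(\<lambda>x. (u x) ^ 4) \<in> borel_measurable lborel"
    and "(\<lambda>x. indicator \<Omega> x *\<^sub>R (u x) ^ 4) \<in> borel_measurable lborel"
    using \<Omega> by (auto intro!: borel_measurable_scaleR borel_measurable_indicator)
  show "AE x in lborel. (u x) ^ 4 = indicator \<Omega> x *\<^sub>R (u x) ^ 4"
    using H10_AE_zero_outside[OF u \<Omega>] by eventually_elim (auto simp: indicator_def)
qed

lemma
  assumes "smooth_domain \<Omega>" "u \<in> H10 \<Omega>" "a \<in> borel_measurable lborel" "\<forall>x\<in>\<Omega>. a x = 0"
  shows I_dom_H10_eq: "I_dom \<Omega> c u = 1/2 * Dq a c lam u - 1/4 * (\<integral>x. (u x) ^ 4 \<partial>lborel)"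
    and dI_dom_H10_eq: "dI_dom \<Omega> c u = Dq a c lam u - (\<integral>x. (u x) ^ 4 \<partial>lborel)"
proof -
  have "open \<Omega>" using assms(1) by (simp add: smooth_domain_def)
  note eqs = Dq_H10_eq[OF assms, of c lam] integral_power4_H10_eq[OF _ assms(2)]
  show "I_dom \<Omega> c u = 1/2 * Dq a c lam u - 1/4 * (\<integral>x. (u x) ^ 4 \<partial>lborel)"
    using \<open>open \<Omega>\<close> by (simp add: eqs I_dom_def)
  show "dI_dom \<Omega> c u = Dq a c lam u - (\<integral>x. (u x) ^ 4 \<partial>lborel)"
    using \<open>open \<Omega>\<close> by (simp add: eqs dI_dom_def)
qed

lemma Dq_zero: "Dq a c lam (\<lambda>_. 0) = 0"
  unfolding Dq_def by (rule integral_eq_zero_AE) (use grad_zero_AE in \<open>auto elim!: eventually_mono\<close>)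

lemma J_swap: "J a b a0 b0 lam \<beta> u v = J b a b0 a0 lam \<beta> v u"
  by (simp add: J_def D_lam_def algebra_simps)

lemma mstar_sys_swap: "mstar_sys a b a0 b0 lam \<beta> = mstar_sys b a b0 a0 lam \<beta>"
proof -
  have "M_sys b a b0 a0 lam \<beta> = prod.swap ` M_sys a b a0 b0 lam \<beta>"
    by (auto simp: M_sys_def image_iff add.commute)
  then show ?thesis
    unfolding mstar_sys_def by (simp add: image_image J_swap case_prod_beta)
qed

lemma J_zero_right:
  "J a b a0 b0 lam \<beta> u (\<lambda>_. 0) = 1/2 * Dq a a0 lam u - 1/4 * (\<integral>x. (u x) ^ 4 \<partial>lborel)"
  by (simp add: J_def D_lam_def Dq_zero)

lemma mstar_sys_le_m_dom:
  assumes \<Omega>: "smooth_domain \<Omega>" and a: "a \<in> borel_measurable lborel" "\<forall>x\<in>\<Omega>. a x = 0"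
  shows "mstar_sys a b a0 b0 lam \<beta> \<le> m_dom \<Omega> a0"
  unfolding m_dom_def
proof (rule Inf_greatest)
  fix z assume "z \<in> ereal ` I_dom \<Omega> a0 ` Neh \<Omega> a0"
  then obtain u where u: "u \<in> Neh \<Omega> a0" and z: "z = ereal (I_dom \<Omega> a0 u)" by blast
  have uH: "u \<in> H10 \<Omega>" "u \<in> H1" "nonzero u" "dI_dom \<Omega> a0 u = 0"
    using u by (auto simp: Neh_def H10_def)
  note eqs = I_dom_H10_eq[OF \<Omega> uH(1) a, of a0 lam] dI_dom_H10_eq[OF \<Omega> uH(1) a, of a0 lam]
  have "(u, \<lambda>_. 0) \<in> M_sys a b a0 b0 lam \<beta>"
    using uH eqs by (simp add: M_sys_def dJ1_def zero_in_H1 Dq_zero)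
  then have "mstar_sys a b a0 b0 lam \<beta> \<le> ereal (J a b a0 b0 lam \<beta> u (\<lambda>_. 0))"
    unfolding mstar_sys_def by (rule Inf_lower[OF rev_image_eqI]) simp
  then show "mstar_sys a b a0 b0 lam \<beta> \<le> z"
    using z eqs by (simp add: J_zero_right)
qed

lemma ereal_le_Inf_add:
  fixes F G :: "'a \<Rightarrow> real" and c :: ereal
  assumes le: "\<And>x y. x \<in> A \<Longrightarrow> y \<in> B \<Longrightarrow> c \<le> ereal (F x) + ereal (G y)"
  shows "c \<le> Inf (ereal ` F ` A) + Inf (ereal ` G ` B)"
proof (cases "A = {} \<or> B = {}")
  case True
  then show ?thesis by (auto simp: top_ereal_def)
next
  case False
  then obtain x0 y0 where x0: "x0 \<in> A" and y0: "y0 \<in> B" by blast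
  show ?thesis
  proof (cases c)
    case MInf
    then show ?thesis by simp
  next
    case PInf
    with le[OF x0 y0] show ?thesis by simp
  next
    case (real r)
    let ?IA = "Inf (ereal ` F ` A)" and ?IB = "Inf (ereal ` G ` B)"
    have lowA: "ereal (r - G y) \<le> ?IA" if "y \<in> B" for y
    proof (rule Inf_greatest)
      fix z assume "z \<in> ereal ` F ` A"
      then obtain x where "x \<in> A" "z = ereal (F x)" by blast
      with le[OF _ that] real show "ereal (r - G y) \<le> z" by force
    qed
    obtain s where s: "?IA = ereal s"
      using lowA[OF y0] Inf_lower[of "ereal (F x0)" "ereal ` F ` A"] x0 by (cases ?IA) auto
    have lowB: "ereal (r - s) \<le> ?IB"
    proof (rule Inf_greatest)
      fix z assume "z \<in> ereal ` G ` B"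
      then obtain y where "y \<in> B" "z = ereal (G y)" by blast
      with lowA[OF \<open>y \<in> B\<close>] s show "ereal (r - s) \<le> z" by simp
    qed
    obtain t where t: "?IB = ereal t"
      using lowB Inf_lower[of "ereal (G y0)" "ereal ` G ` B"] y0 by (cases ?IB) auto
    show ?thesis using lowB real s t by simp
  qed
qed

text \<open>Positivity of \<open>Dq\<close> forces \<open>\<integral>u\<^sup>4 = Dq a c lam u \<noteq> 0\<close> on the Nehari set, which excludes the junk
  value \<open>0\<close> of a non-integrable Bochner integral.\<close>

lemma Neh_integrable_power4:
  assumes "smooth_domain \<Omega>" "a \<in> borel_measurable lborel" "\<forall>x\<in>\<Omega>. a x = 0"
    and u: "u \<in> Neh \<Omega> c" and pos: "Dq a c lam u > 0"
  shows "integrable lborel (\<lambda>x. (u x) ^ 4)"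
proof (rule ccontr)
  assume "\<not> integrable lborel (\<lambda>x. (u x) ^ 4)"
  then have "(\<integral>x. (u x) ^ 4 \<partial>lborel) = 0" by (rule not_integrable_integral_eq)
  moreover have "u \<in> H10 \<Omega>" "dI_dom \<Omega> c u = 0" using u by (auto simp: Neh_def)
  ultimately show False using dI_dom_H10_eq[OF assms(1) _ assms(2,3), of u c lam] pos by simp
qed

lemma m_sys_le_m_dom_add:
  assumes \<Omega>: "smooth_domain \<Omega>\<^sub>a" "smooth_domain \<Omega>\<^sub>b" "\<Omega>\<^sub>a \<inter> \<Omega>\<^sub>b = {}"
    and a: "a \<in> borel_measurable lborel" "\<forall>x\<in>\<Omega>\<^sub>a. a x = 0"
    and b: "b \<in> borel_measurable lborel" "\<forall>x\<in>\<Omega>\<^sub>b. b x = 0"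
    and pos: "\<forall>u\<in>H1. nonzero u \<longrightarrow> Dq a a0 lam u > 0" "\<forall>u\<in>H1. nonzero u \<longrightarrow> Dq b b0 lam u > 0"
  shows "m_sys a b a0 b0 lam \<beta> \<le> m_dom \<Omega>\<^sub>a a0 + m_dom \<Omega>\<^sub>b b0"
  unfolding m_dom_def
proof (rule ereal_le_Inf_add)
  fix u v assume u: "u \<in> Neh \<Omega>\<^sub>a a0" and v: "v \<in> Neh \<Omega>\<^sub>b b0"
  have uH: "u \<in> H10 \<Omega>\<^sub>a" "u \<in> H1" "nonzero u" "dI_dom \<Omega>\<^sub>a a0 u = 0"
    using u by (auto simp: Neh_def H10_def)
  have vH: "v \<in> H10 \<Omega>\<^sub>b" "v \<in> H1" "nonzero v" "dI_dom \<Omega>\<^sub>b b0 v = 0"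
    using v by (auto simp: Neh_def H10_def)
  have "open \<Omega>\<^sub>a" "open \<Omega>\<^sub>b" using \<Omega> by (simp_all add: smooth_domain_def)
  have disjoint_supports: "AE x in lborel. (u x)\<^sup>2 * (v x)\<^sup>2 = 0"
    using H10_AE_zero_outside[OF uH(1)] H10_AE_zero_outside[OF vH(1)] \<open>open \<Omega>\<^sub>a\<close> \<open>open \<Omega>\<^sub>b\<close> \<Omega>(3)
    by (auto elim!: eventually_mono eventually_rev_mp)
  have meas: "u \<in> borel_measurable lborel" "v \<in> borel_measurable lborel"
    using H1_borel_measurable uH(2) vH(2) by blast+
  have coupling: "(\<integral>x. (u x) ^ 4 + \<beta> * (u x)\<^sup>2 * (v x)\<^sup>2 \<partial>lborel) = (\<integral>x. (u x) ^ 4 \<partial>lborel)"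
    "(\<integral>x. (v x) ^ 4 + \<beta> * (v x)\<^sup>2 * (u x)\<^sup>2 \<partial>lborel) = (\<integral>x. (v x) ^ 4 \<partial>lborel)"
    "(\<integral>x. (u x) ^ 4 + (v x) ^ 4 + 2 * \<beta> * (u x)\<^sup>2 * (v x)\<^sup>2 \<partial>lborel) = (\<integral>x. (u x) ^ 4 + (v x) ^ 4 \<partial>lborel)"
    by (rule integral_cong_AE,
        use meas disjoint_supports in \<open>auto elim!: eventually_mono simp: mult.commute\<close>)+
  have "(\<integral>x. (u x) ^ 4 + (v x) ^ 4 \<partial>lborel) = (\<integral>x. (u x) ^ 4 \<partial>lborel) + (\<integral>x. (v x) ^ 4 \<partial>lborel)"
    using Neh_integrable_power4[OF \<Omega>(1) a u] Neh_integrable_power4[OF \<Omega>(2) b v] pos uH vH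
    by (intro Bochner_Integration.integral_add) auto
  note eqs = I_dom_H10_eq[OF \<Omega>(1) uH(1) a, of a0 lam] dI_dom_H10_eq[OF \<Omega>(1) uH(1) a, of a0 lam]
    I_dom_H10_eq[OF \<Omega>(2) vH(1) b, of b0 lam] dI_dom_H10_eq[OF \<Omega>(2) vH(1) b, of b0 lam]
  have "(u, v) \<in> N_sys a b a0 b0 lam \<beta>"
    using uH vH eqs coupling by (simp add: N_sys_def dJ1_def)
  then have "m_sys a b a0 b0 lam \<beta> \<le> ereal (J a b a0 b0 lam \<beta> u v)"
    unfolding m_sys_def by (rule Inf_lower[OF rev_image_eqI]) simp
  also have "J a b a0 b0 lam \<beta> u v = I_dom \<Omega>\<^sub>a a0 u + I_dom \<Omega>\<^sub>b b0 v"
    using eqs coupling \<open>(\<integral>x. (u x) ^ 4 + (v x) ^ 4 \<partial>lborel) = _\<close>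
    by (simp add: J_def D_lam_def algebra_simps)
  finally show "m_sys a b a0 b0 lam \<beta> \<le> ereal (I_dom \<Omega>\<^sub>a a0 u) + ereal (I_dom \<Omega>\<^sub>b b0 v)"
    by simp
qed

theorem lemma3p8:
  fixes a b :: "R4 \<Rightarrow> real" and a_inf b_inf a0 b0 lam :: real
  assumes D1: "continuous_on UNIV a" "continuous_on UNIV b" "\<forall>x. a x \<ge> 0" "\<forall>x. b x \<ge> 0"
    and D2: "(a \<longlongrightarrow> a_inf) at_infinity" "a_inf > 0" "\<forall>x. a x \<le> a_inf"
            "(b \<longlongrightarrow> b_inf) at_infinity" "b_inf > 0" "\<forall>x. b x \<le> b_inf"
    and D3: "smooth_domain (interior (a -` {0}))" "bounded (interior (a -` {0}))"
            "closure (interior (a -` {0})) = a -` {0}"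
            "smooth_domain (interior (b -` {0}))" "bounded (interior (b -` {0}))"
            "closure (interior (b -` {0})) = b -` {0}"
            "closure (interior (a -` {0})) \<inter> closure (interior (b -` {0})) = {}"
    and lam: "lam > 0"
    and posdef: "\<forall>u\<in>H1. \<forall>v\<in>H1. (nonzero u \<or> nonzero v) \<longrightarrow> D_lam a b a0 b0 lam u v > 0"
  shows "\<forall>\<beta>::real.
     m_dom (interior (a -` {0})) a0 + m_dom (interior (b -` {0})) b0 \<ge> m_sys a b a0 b0 lam \<beta> \<and>
     min (m_dom (interior (a -` {0})) a0) (m_dom (interior (b -` {0})) b0) \<ge> mstar_sys a b a0 b0 lam \<beta>"
proof (intro allI conjI)
  fix \<beta> :: real
  have vanish: "\<forall>x\<in>interior (a -` {0}). a x = 0" "\<forall>x\<in>interior (b -` {0}). b x = 0"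
    using interior_subset by blast+
  have disjoint: "interior (a -` {0}) \<inter> interior (b -` {0}) = {}"
    using D3(7) closure_subset by blast
  have meas: "a \<in> borel_measurable lborel" "b \<in> borel_measurable lborel"
    using borel_measurable_continuous_onI[OF D1(1)] borel_measurable_continuous_onI[OF D1(2)]
    by (simp_all add: measurable_lborel1)
  have pos: "\<forall>u\<in>H1. nonzero u \<longrightarrow> Dq a a0 lam u > 0" "\<forall>u\<in>H1. nonzero u \<longrightarrow> Dq b b0 lam u > 0"
    using posdef zero_in_H1 by (force simp: D_lam_def Dq_zero)+
  show "m_sys a b a0 b0 lam \<beta> \<le> m_dom (interior (a -` {0})) a0 + m_dom (interior (b -` {0})) b0"
    by (rule m_sys_le_m_dom_add[OF D3(1,4) disjoint meas(1) vanish(1) meas(2) vanish(2) pos])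
  have "mstar_sys a b a0 b0 lam \<beta> \<le> m_dom (interior (a -` {0})) a0"
    by (rule mstar_sys_le_m_dom[OF D3(1) meas(1) vanish(1)])
  moreover have "mstar_sys a b a0 b0 lam \<beta> \<le> m_dom (interior (b -` {0})) b0"
    unfolding mstar_sys_swap[of a] by (rule mstar_sys_le_m_dom[OF D3(4) meas(2) vanish(2)])
  ultimately show "mstar_sys a b a0 b0 lam \<beta> \<le> min (m_dom (interior (a -` {0})) a0) (m_dom (interior (b -` {0})) b0)"
    by simp
qed

end
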